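(* Let $K\ge1$, $g_1,\dots,g_K$ probability densities on $\mathbb{R}^d$ (finite at the data points), and $x_1,\dots,x_N\in\mathbb{R}^d$. Suppose $(\pi_1,\dots,\pi_K)$ is an optimal solution of $$\max_{\pi'}\ \sum_{n=1}^N\log\Big(\sum_{k=1}^K\pi'_k g_k(x_n)\Big)\quad\text{s.t.}\quad \pi'_1,\dots,\pi'_K\ge0,\ \sum_{k=1}^K\pi'_k=1,$$ and that $f=\sum_k\pi_kg_k$ satisfies $0<f(x_n)<\infty$ for all $n$. Then $$0\le \mathrm{MC}(\{\pi_k,g_k\}_{k=1}^K;\{x_n\}_{n=1}^N)\le\log K.$$
   Context: For mixture weights $\pi_k\ge 0$ summing to one, densities $g_k$, $f=\sum_k \pi_k g_k$, and data $x_1,\dots,x_N$ with $0<f(x_n)<\infty$ for all $n$, the mixture complexity is $$\mathrm{MC}(\{\pi_k,g_k\}_{k=1}^K;\{x_n\}_{n=1}^N)=\frac1N\sum_{n=1}^N\sum_{k=1}^K\frac{\pi_k g_k(x_n)}{f(x_n)}\log\frac{g_k(x_n)}{f(x_n)},$$ with the convention that a term with $\pi_k g_k(x_n)=0$ equals $0$. *)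

theory Defs
  imports "HOL-Analysis.Analysis"
begin

definition in_simplex :: "nat \<Rightarrow> (nat \<Rightarrow> real) \<Rightarrow> bool" where
  "in_simplex K p \<longleftrightarrow> (\<forall>k<K. p k \<ge> 0) \<and> (\<Sum>k<K. p k) = 1"

definition mixture :: "nat \<Rightarrow> (nat \<Rightarrow> real) \<Rightarrow> (nat \<Rightarrow> 'a \<Rightarrow> real) \<Rightarrow> 'a \<Rightarrow> real" where
  "mixture K p g x = (\<Sum>k<K. p k * g k x)"

definition prob_density :: "('a::euclidean_space \<Rightarrow> real) \<Rightarrow> bool" where
  "prob_density h \<longleftrightarrow> h \<in> borel_measurable lborel \<and> (\<forall>x. h x \<ge> 0)
     \<and> integrable lborel h \<and> integral\<^sup>L lborel h = 1"

definition loglik :: "nat \<Rightarrow> (nat \<Rightarrow> real) \<Rightarrow> (nat \<Rightarrow> 'a \<Rightarrow> real) \<Rightarrow> nat \<Rightarrow> (nat \<Rightarrow> 'a) \<Rightarrow> real" where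
  "loglik K p g N x = (\<Sum>n<N. ln (mixture K p g (x n)))"

(* mixture complexity, with the convention that a term with p_k g_k(x_n) = 0 is 0 *)
definition MC :: "nat \<Rightarrow> (nat \<Rightarrow> real) \<Rightarrow> (nat \<Rightarrow> 'a \<Rightarrow> real) \<Rightarrow> nat \<Rightarrow> (nat \<Rightarrow> 'a) \<Rightarrow> real" where
  "MC K p g N x = (1 / real N) * (\<Sum>n<N. \<Sum>k<K.
      (if p k * g k (x n) = 0 then 0
       else (p k * g k (x n) / mixture K p g (x n)) * ln (g k (x n) / mixture K p g (x n))))"

end

theory Submission
  imports Defs
begin

(* Writing r_nk for the responsibility of component k for x_n, each summand of MC is
   r_nk ln (r_nk / p_k).  Since ln y \<ge> 1 - 1/y it is at least r_nk - p_k, and the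
   sum over k of these lower bounds vanishes, so MC \<ge> 0.  Since r_nk \<le> 1 it is at most
   -r_nk ln p_k.  Optimality of p, tested along the segment towards the k-th vertex of
   the simplex, gives the first-order condition \<Sum>_n g_k(x_n)/f(x_n) \<le> N, and as the
   p-weighted average of these quantities equals N, equality holds wherever p_k > 0,
   i.e. \<Sum>_n r_nk = N p_k.  Hence N MC is at most N times the entropy of p, which is
   at most N ln K. *)

lemma entropy_le_ln_card:
  fixes p :: "'a \<Rightarrow> real"
  assumes "finite A" "A \<noteq> {}" "\<And>a. a \<in> A \<Longrightarrow> p a \<ge> 0" "sum p A = 1"
  shows "(\<Sum>a\<in>A. - p a * ln (p a)) \<le> ln (card A)"
proof -
  have card_pos: "real (card A) > 0"
    using assms(1,2) by (simp add: card_gt_0_iff)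
  have "- p a * ln (p a) - p a * ln (card A) \<le> 1 / card A - p a" if "a \<in> A" for a
  proof (cases "p a = 0")
    case False
    with assms(3)[OF that] have "p a > 0" by simp
    then have "p a * (ln (1 / card A) - ln (p a)) \<le> p a * ((1 / card A - p a) / p a)"
      using card_pos by (intro mult_left_mono ln_diff_le) auto
    moreover have "p a * (ln (1 / card A) - ln (p a)) = - p a * ln (p a) - p a * ln (card A)"
      using card_pos by (simp add: ln_div algebra_simps)
    ultimately show ?thesis
      using \<open>p a > 0\<close> by simp
  qed (simp add: card_pos)
  then have "(\<Sum>a\<in>A. - p a * ln (p a) - p a * ln (card A)) \<le> (\<Sum>a\<in>A. 1 / card A - p a)"
    by (rule sum_mono)
  then show ?thesis
    using assms(4) card_pos by (simp add: sum_subtractf sum_distrib_right[symmetric])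
qed

lemma sum_nonpos_if_sum_ln_one_plus_nonpos:
  fixes c :: "'a \<Rightarrow> real"
  assumes "finite A" and ge: "\<And>a. a \<in> A \<Longrightarrow> c a \<ge> -1"
    and ln_sum: "\<And>t. 0 < t \<Longrightarrow> t < 1 \<Longrightarrow> (\<Sum>a\<in>A. ln (1 + t * c a)) \<le> 0"
  shows "sum c A \<le> 0"
proof -
  have "(\<Sum>a\<in>A. c a / (1 + t * c a)) \<le> 0" if t: "0 < t" "t < 1" for t
  proof -
    have pos: "1 + t * c a > 0" if "a \<in> A" for a
      using mult_left_mono[OF ge[OF that], of t] t by simp
    have "t * c a / (1 + t * c a) \<le> ln (1 + t * c a)" if "a \<in> A" for a
    proof -
      have "ln 1 - ln (1 + t * c a) \<le> (1 - (1 + t * c a)) / (1 + t * c a)"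
        using pos[OF that] by (intro ln_diff_le) auto
      then show ?thesis
        by simp
    qed
    then have "(\<Sum>a\<in>A. t * c a / (1 + t * c a)) \<le> (\<Sum>a\<in>A. ln (1 + t * c a))"
      by (rule sum_mono)
    also have "\<dots> \<le> 0"
      using ln_sum[OF t] .
    finally have "t * (\<Sum>a\<in>A. c a / (1 + t * c a)) \<le> 0"
      by (simp add: sum_distrib_left)
    then show ?thesis
      using t by (simp add: mult_le_0_iff)
  qed
  then have "eventually (\<lambda>t. (\<Sum>a\<in>A. c a / (1 + t * c a)) \<le> 0) (at_right (0::real))"
    unfolding eventually_at_right_field using zero_less_one by blast
  moreover have "((\<lambda>t. \<Sum>a\<in>A. c a / (1 + t * c a)) \<longlongrightarrow> (\<Sum>a\<in>A. c a / (1 + 0 * c a)))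
      (at_right 0)"
    by (intro tendsto_intros) auto
  ultimately have "(\<Sum>a\<in>A. c a / (1 + 0 * c a)) \<le> 0"
    by (intro tendsto_upperbound) auto
  then show ?thesis
    by simp
qed

definition responsibility :: "nat \<Rightarrow> (nat \<Rightarrow> real) \<Rightarrow> (nat \<Rightarrow> 'a \<Rightarrow> real) \<Rightarrow> 'a \<Rightarrow> nat \<Rightarrow> real"
  where "responsibility K p g y k = p k * g k y / mixture K p g y"

definition mc_term :: "nat \<Rightarrow> (nat \<Rightarrow> real) \<Rightarrow> (nat \<Rightarrow> 'a \<Rightarrow> real) \<Rightarrow> 'a \<Rightarrow> nat \<Rightarrow> real"
  where "mc_term K p g y k =
    (if p k * g k y = 0 then 0 else responsibility K p g y k * ln (g k y / mixture K p g y))"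

lemma MC_eq_sum_mc_term: "MC K p g N x = 1 / real N * (\<Sum>n<N. \<Sum>k<K. mc_term K p g (x n) k)"
  unfolding MC_def mc_term_def responsibility_def ..

lemma sum_responsibility:
  "mixture K p g y > 0 \<Longrightarrow> (\<Sum>k<K. responsibility K p g y k) = 1"
  by (simp add: responsibility_def mixture_def sum_divide_distrib[symmetric])

lemma responsibility_le_one:
  assumes "\<And>j. j < K \<Longrightarrow> p j \<ge> 0 \<and> g j y \<ge> 0" "k < K" "mixture K p g y > 0"
  shows "responsibility K p g y k \<le> 1"
proof -
  have "p k * g k y \<le> mixture K p g y"
    unfolding mixture_def using assms(1,2) by (intro member_le_sum) auto
  then show ?thesis
    using assms(3) by (simp add: responsibility_def)
qed

lemma mc_term_ge:
  assumes "p k \<ge> 0" "g k y \<ge> 0" "mixture K p g y > 0"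
  shows "responsibility K p g y k - p k \<le> mc_term K p g y k"
proof (cases "p k * g k y = 0")
  case True
  then show ?thesis
    using assms(1) by (auto simp: mc_term_def responsibility_def)
next
  case False
  define f where "f = mixture K p g y"
  define r where "r = responsibility K p g y k"
  have pos: "p k > 0" "g k y > 0" "f > 0"
    using False assms by (auto simp: f_def less_le)
  have r_eq: "r = p k * g k y / f"
    by (simp add: r_def f_def responsibility_def)
  have "ln f - ln (g k y) \<le> (f - g k y) / g k y"
    using pos by (intro ln_diff_le) auto
  then have "(g k y - f) / g k y \<le> ln (g k y) - ln f"
    by (simp add: diff_divide_distrib)
  then have "r * ((g k y - f) / g k y) \<le> r * (ln (g k y) - ln f)"
    using pos by (intro mult_left_mono) (auto simp: r_eq)
  moreover have "r * ((g k y - f) / g k y) = r - p k"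
    using pos by (simp add: r_eq field_simps)
  moreover have "mc_term K p g y k = r * (ln (g k y) - ln f)"
    using False pos by (simp add: mc_term_def r_def f_def ln_divide_pos)
  ultimately show ?thesis
    by (simp add: r_def)
qed

lemma mc_term_le:
  assumes "\<And>j. j < K \<Longrightarrow> p j \<ge> 0 \<and> g j y \<ge> 0" "k < K" "mixture K p g y > 0"
  shows "mc_term K p g y k \<le> - responsibility K p g y k * ln (p k)"
proof (cases "p k * g k y = 0")
  case True
  then show ?thesis
    by (auto simp: mc_term_def responsibility_def)
next
  case False
  define r where "r = responsibility K p g y k"
  have pos: "p k > 0" "g k y > 0" "r > 0"
    using False assms by (auto simp: r_def responsibility_def less_le)
  have "g k y / mixture K p g y = r / p k"
    using pos by (simp add: r_def responsibility_def)
  moreover have "ln r \<le> 0"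
    using pos responsibility_le_one[OF assms] by (simp add: r_def)
  ultimately have "r * ln (g k y / mixture K p g y) \<le> r * - ln (p k)"
    using pos by (intro mult_left_mono) (auto simp: ln_div)
  then show ?thesis
    using False by (simp add: mc_term_def r_def)
qed

lemma sum_mc_term_nonneg:
  assumes "in_simplex K p" "\<And>k. k < K \<Longrightarrow> g k y \<ge> 0" "mixture K p g y > 0"
  shows "(\<Sum>k<K. mc_term K p g y k) \<ge> 0"
proof -
  have "(\<Sum>k<K. responsibility K p g y k - p k) \<le> (\<Sum>k<K. mc_term K p g y k)"
    using assms by (intro sum_mono mc_term_ge) (auto simp: in_simplex_def)
  moreover have "(\<Sum>k<K. responsibility K p g y k - p k) = 0"
    using assms by (simp add: sum_subtractf sum_responsibility in_simplex_def)
  ultimately show ?thesis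
    by simp
qed

lemma mixture_towards_vertex:
  assumes "k < K"
  shows "mixture K (\<lambda>j. (1 - t) * p j + (if j = k then t else 0)) g y
    = (1 - t) * mixture K p g y + t * g k y"
proof -
  have "(\<Sum>j<K. ((1 - t) * p j + (if j = k then t else 0)) * g j y)
      = (\<Sum>j<K. (1 - t) * (p j * g j y) + (if j = k then t * g k y else 0))"
    by (rule sum.cong) (auto simp: algebra_simps)
  also have "\<dots> = (1 - t) * (\<Sum>j<K. p j * g j y) + t * g k y"
    using assms by (simp add: sum.distrib sum_distrib_left)
  finally show ?thesis
    unfolding mixture_def .
qed

lemma in_simplex_towards_vertex:
  assumes "in_simplex K p" "k < K" "0 \<le> t" "t \<le> 1"
  shows "in_simplex K (\<lambda>j. (1 - t) * p j + (if j = k then t else 0))"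
  using assms by (auto simp: in_simplex_def sum.distrib sum_distrib_left[symmetric])

lemma optimal_weights_score_le:
  assumes g_nonneg: "\<And>k n. k < K \<Longrightarrow> n < N \<Longrightarrow> g k (x n) \<ge> 0"
    and p: "in_simplex K p"
    and opt: "\<And>p'. in_simplex K p' \<Longrightarrow> (\<forall>n<N. mixture K p' g (x n) > 0) \<Longrightarrow>
               loglik K p' g N x \<le> loglik K p g N x"
    and f_pos: "\<And>n. n < N \<Longrightarrow> mixture K p g (x n) > 0"
    and k: "k < K"
  shows "(\<Sum>n<N. g k (x n) / mixture K p g (x n)) \<le> real N"
proof -
  define f where "f n = mixture K p g (x n)" for n
  define c where "c n = g k (x n) / f n - 1" for n
  have f_pos': "n < N \<Longrightarrow> f n > 0" for n
    using f_pos by (simp add: f_def)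
  have shifted: "mixture K (\<lambda>j. (1 - t) * p j + (if j = k then t else 0)) g (x n) = f n * (1 + t * c n)"
    if "n < N" for n t
  proof -
    have "mixture K (\<lambda>j. (1 - t) * p j + (if j = k then t else 0)) g (x n)
        = (1 - t) * f n + t * g k (x n)"
      unfolding f_def by (rule mixture_towards_vertex[OF k])
    also have "\<dots> = f n * (1 + t * c n)"
      using f_pos'[OF that] by (simp add: c_def field_simps)
    finally show ?thesis .
  qed
  have c_ge: "c n \<ge> -1" if "n < N" for n
    using f_pos'[OF that] g_nonneg[OF k that] by (simp add: c_def)
  have ln_bound: "(\<Sum>n<N. ln (1 + t * c n)) \<le> 0" if t: "0 < t" "t < 1" for t
  proof -
    have one_plus_pos: "1 + t * c n > 0" if "n < N" for n
      using mult_left_mono[OF c_ge[OF that], of t] t by simp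
    have "loglik K (\<lambda>j. (1 - t) * p j + (if j = k then t else 0)) g N x \<le> loglik K p g N x"
      using t one_plus_pos f_pos'
      by (intro opt in_simplex_towards_vertex[OF p k]) (auto simp: shifted)
    moreover have "loglik K (\<lambda>j. (1 - t) * p j + (if j = k then t else 0)) g N x
        = (\<Sum>n<N. ln (f n) + ln (1 + t * c n))"
      unfolding loglik_def using f_pos' one_plus_pos
      by (intro sum.cong) (simp_all add: shifted ln_mult_pos)
    moreover have "loglik K p g N x = (\<Sum>n<N. ln (f n))"
      by (simp add: loglik_def f_def)
    ultimately show ?thesis
      by (simp add: sum.distrib)
  qed
  have "sum c {..<N} \<le> 0"
    by (rule sum_nonpos_if_sum_ln_one_plus_nonpos[OF finite_lessThan]) (simp_all add: c_ge ln_bound)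
  then show ?thesis
    by (simp add: c_def f_def sum_subtractf)
qed

lemma optimal_weights_responsibility_sum:
  assumes g_nonneg: "\<And>k n. k < K \<Longrightarrow> n < N \<Longrightarrow> g k (x n) \<ge> 0"
    and p: "in_simplex K p"
    and opt: "\<And>p'. in_simplex K p' \<Longrightarrow> (\<forall>n<N. mixture K p' g (x n) > 0) \<Longrightarrow>
               loglik K p' g N x \<le> loglik K p g N x"
    and f_pos: "\<And>n. n < N \<Longrightarrow> mixture K p g (x n) > 0"
    and k: "k < K"
  shows "(\<Sum>n<N. responsibility K p g (x n) k) = real N * p k"
proof -
  define score where "score j = (\<Sum>n<N. g j (x n) / mixture K p g (x n))" for j
  have p_nonneg: "j < K \<Longrightarrow> p j \<ge> 0" and p_sum: "(\<Sum>j<K. p j) = 1" for j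
    using p by (auto simp: in_simplex_def)
  have responsibility_sum: "(\<Sum>n<N. responsibility K p g (x n) j) = p j * score j" for j
    by (simp add: responsibility_def score_def sum_distrib_left)
  have score_le: "j < K \<Longrightarrow> score j \<le> real N" for j
    unfolding score_def by (rule optimal_weights_score_le[OF g_nonneg p opt f_pos])
  have "(\<Sum>j<K. p j * score j) = (\<Sum>n<N. \<Sum>j<K. responsibility K p g (x n) j)"
    by (simp add: responsibility_sum[symmetric] sum.swap[of _ "{..<K}"])
  also have "\<dots> = real N"
    using f_pos by (simp add: sum_responsibility)
  finally have "(\<Sum>j<K. p j * (real N - score j)) = 0"
    using p_sum by (simp add: algebra_simps sum_subtractf sum_distrib_left[symmetric])
  then have "p k * (real N - score k) = 0"
    using k p_nonneg score_le by (subst (asm) sum_nonneg_eq_0_iff) auto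
  then show ?thesis
    by (auto simp: responsibility_sum)
qed

lemma optimal_weights_sum_mc_term_le:
  assumes "K \<ge> 1"
    and g_nonneg: "\<And>k n. k < K \<Longrightarrow> n < N \<Longrightarrow> g k (x n) \<ge> 0"
    and p: "in_simplex K p"
    and opt: "\<And>p'. in_simplex K p' \<Longrightarrow> (\<forall>n<N. mixture K p' g (x n) > 0) \<Longrightarrow>
               loglik K p' g N x \<le> loglik K p g N x"
    and f_pos: "\<And>n. n < N \<Longrightarrow> mixture K p g (x n) > 0"
  shows "(\<Sum>n<N. \<Sum>k<K. mc_term K p g (x n) k) \<le> real N * ln K"
proof -
  have p_nonneg: "k < K \<Longrightarrow> p k \<ge> 0" and p_sum: "sum p {..<K} = 1" for k
    using p by (auto simp: in_simplex_def)
  have "0 \<in> {..<K}"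
    using assms(1) by simp
  then have entropy_le: "(\<Sum>k<K. - p k * ln (p k)) \<le> ln K"
    using entropy_le_ln_card[OF finite_lessThan _ p_nonneg p_sum] by auto
  have "mc_term K p g (x n) k \<le> - responsibility K p g (x n) k * ln (p k)"
    if "n < N" "k < K" for n k
    using p_nonneg g_nonneg that f_pos by (intro mc_term_le) auto
  then have "(\<Sum>n<N. \<Sum>k<K. mc_term K p g (x n) k)
      \<le> (\<Sum>n<N. \<Sum>k<K. - responsibility K p g (x n) k * ln (p k))"
    by (intro sum_mono) auto
  also have "\<dots> = (\<Sum>k<K. (\<Sum>n<N. responsibility K p g (x n) k) * - ln (p k))"
    by (subst sum.swap) (simp add: sum_distrib_right sum_negf)
  also have "\<dots> = (\<Sum>k<K. real N * p k * - ln (p k))"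
  proof (rule sum.cong[OF refl])
    fix k
    assume "k \<in> {..<K}"
    then have "(\<Sum>n<N. responsibility K p g (x n) k) = real N * p k"
      using optimal_weights_responsibility_sum[OF g_nonneg p opt f_pos] by blast
    then show "(\<Sum>n<N. responsibility K p g (x n) k) * - ln (p k) = real N * p k * - ln (p k)"
      by (simp only:)
  qed
  also have "\<dots> = real N * (\<Sum>k<K. - p k * ln (p k))"
    by (simp add: sum_distrib_left mult.assoc)
  also have "\<dots> \<le> real N * ln K"
    using entropy_le by (rule mult_left_mono) simp
  finally show ?thesis .
qed

theorem proposition3:
  fixes K N :: nat and p :: "nat \<Rightarrow> real" and g :: "nat \<Rightarrow> 'a::euclidean_space \<Rightarrow> real"
    and x :: "nat \<Rightarrow> 'a"
  assumes "K \<ge> 1"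
    and "\<And>k. k < K \<Longrightarrow> prob_density (g k)"
    and "in_simplex K p"
    and opt: "\<And>p'. in_simplex K p' \<Longrightarrow> (\<forall>n<N. mixture K p' g (x n) > 0) \<Longrightarrow>
               loglik K p' g N x \<le> loglik K p g N x"
    and "\<And>n. n < N \<Longrightarrow> mixture K p g (x n) > 0"
  shows "0 \<le> MC K p g N x \<and> MC K p g N x \<le> ln (real K)"
proof -
  have g_nonneg: "\<And>k y. k < K \<Longrightarrow> g k y \<ge> 0"
    using assms(2) by (simp add: prob_density_def)
  have "0 \<le> (\<Sum>n<N. \<Sum>k<K. mc_term K p g (x n) k)"
    using assms(3,5) g_nonneg by (intro sum_nonneg sum_mc_term_nonneg) auto
  moreover have "(\<Sum>n<N. \<Sum>k<K. mc_term K p g (x n) k) \<le> real N * ln K"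
    using optimal_weights_sum_mc_term_le[OF assms(1) _ assms(3) opt assms(5)] g_nonneg by blast
  ultimately show ?thesis
    using assms(1) by (cases "N = 0") (auto simp: MC_eq_sum_mc_term pos_divide_le_eq mult.commute)
qed

end
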